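(* Let $\Gamma$ be a connected $3$-plane drawing. Then \[ 2|E_2|+4|E_3| \;\ge\; 3N(A_3)+N(B_4)+4N(A_4)+2N(B_5)+5N(A_5)+\tau(B_4,L)+\tau(B_5,L)+\tau(A_3,L)+\tau(A_5,L). \]
   Context: Drawings are on the sphere: vertices are distinct points, edges (of a graph possibly with parallel edges, no loops) are Jordan arcs; any two edges share finitely many points, each a common endpoint or a proper crossing; no three edges cross at one point; no edge crosses itself; adjacent edges do not cross. A drawing is $3$-plane if every edge is crossed at most three times. For $i\in\{0,1,2,3\}$, $E_i$ is the set of edges with exactly $i$ crossings. An edge with $i$ crossings is split into $i+1$ edge-segments; an edge-segment is inner if both its endpoints are crossings and outer otherwise. The planarization replaces each crossing by a degree-$4$ vertex; the drawing is connected if its planarization is connected. Cells are the components of the sphere minus all vertices and edges; the boundary of a cell is a cyclic sequence alternating between edge-segments and vertices/crossings. The size of a cell is the number of vertex incidences plus edge-segment incidences along its boundary (crossings not counted). Cell types: $A_3$: three crossings and three inner edge-segments, no vertex. $A_4$: four crossings and four inner edge-segments. $B_4$: boundary $v$, outer segment, crossing, inner segment, crossing, outer segment. $B_5$: boundary $v$, outer segment, crossing, inner segment, crossing, inner segment, crossing, outer segment. $A_5$: five crossings and five inner segments. $L$: any cell of size at least $6$. $N(T)$ is the number of cells of type $T$. Trails: a trail is a sequence $(c_1,\dots,c_\ell)$, $\ell\ge 2$, of cells such that (1) neither $c_1$ nor $c_\ell$ is of type $A_4$; (2) consecutive cells share an inner edge-segment; (3) each of $c_2,\dots,c_{\ell-1}$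 is an $A_4$-cell whose two edge-segments shared with its neighbours are opposite on its boundary. A trail and its reversal are the same trail. $\tau(T,T')$ is the number of trails whose end cells are of types $T$ and $T'$. *)

theory Defs
  imports Main "HOL-Combinatorics.Permutations"
begin

text \<open>
  Combinatorial encoding of a connected drawing on the sphere through its
  planarization, given as a combinatorial map (rotation system):
  \<^item> D      : finite set of darts (half edge-segments of the planarization);
  \<^item> al     : fixed-point-free involution on D pairing the two darts of an edge-segment;
  \<^item> sg     : permutation of D giving the cyclic rotation of darts around each node;
  \<^item> C      : the darts located at crossings (a union of sg-orbits); the remaining
             nodes of the planarization are the vertices of the drawing.
  At a crossing (a node of degree 4), an edge passes from a dart d to the opposite
  dart sg (sg d).
\<close>

definition node :: "('d \<Rightarrow> 'd) \<Rightarrow> 'd \<Rightarrow> 'd set" where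
  "node sg d = {(sg ^^ n) d | n. True}"

definition phi :: "('d \<Rightarrow> 'd) \<Rightarrow> ('d \<Rightarrow> 'd) \<Rightarrow> 'd \<Rightarrow> 'd" where
  "phi al sg = sg \<circ> al"

definition cell :: "('d \<Rightarrow> 'd) \<Rightarrow> ('d \<Rightarrow> 'd) \<Rightarrow> 'd \<Rightarrow> 'd set" where
  "cell al sg d = {(phi al sg ^^ n) d | n. True}"

definition cells :: "'d set \<Rightarrow> ('d \<Rightarrow> 'd) \<Rightarrow> ('d \<Rightarrow> 'd) \<Rightarrow> 'd set set" where
  "cells D al sg = cell al sg ` D"

definition nodes :: "'d set \<Rightarrow> ('d \<Rightarrow> 'd) \<Rightarrow> 'd set set" where
  "nodes D sg = node sg ` D"

definition edge_rel :: "'d set \<Rightarrow> ('d \<Rightarrow> 'd) \<Rightarrow> ('d \<Rightarrow> 'd) \<Rightarrow> 'd set \<Rightarrow> ('d \<times> 'd) set" where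
  "edge_rel D al sg C = {(x, al x) | x. x \<in> D} \<union> {(x, sg (sg x)) | x. x \<in> C}"

definition edge_of :: "'d set \<Rightarrow> ('d \<Rightarrow> 'd) \<Rightarrow> ('d \<Rightarrow> 'd) \<Rightarrow> 'd set \<Rightarrow> 'd \<Rightarrow> 'd set" where
  "edge_of D al sg C d = {y. (d, y) \<in> (edge_rel D al sg C)\<^sup>*}"

definition edges :: "'d set \<Rightarrow> ('d \<Rightarrow> 'd) \<Rightarrow> ('d \<Rightarrow> 'd) \<Rightarrow> 'd set \<Rightarrow> 'd set set" where
  "edges D al sg C = edge_of D al sg C ` D"

text \<open>An edge with i crossings consists of i+1 edge-segments, i.e. 2(i+1) darts.\<close>
definition E_i :: "'d set \<Rightarrow> ('d \<Rightarrow> 'd) \<Rightarrow> ('d \<Rightarrow> 'd) \<Rightarrow> 'd set \<Rightarrow> nat \<Rightarrow> 'd set set" where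
  "E_i D al sg C i = {e \<in> edges D al sg C. card e = 2 * (i + 1)}"

definition connected_drawing :: "'d set \<Rightarrow> ('d \<Rightarrow> 'd) \<Rightarrow> ('d \<Rightarrow> 'd) \<Rightarrow> 'd set \<Rightarrow> bool" where
  "connected_drawing D al sg C \<longleftrightarrow>
     finite D \<and>
     al permutes D \<and> (\<forall>d\<in>D. al (al d) = d \<and> al d \<noteq> d) \<and>
     sg permutes D \<and>
     C \<subseteq> D \<and> (\<forall>d\<in>C. sg d \<in> C) \<and>
     \<comment> \<open>crossings are nodes of degree exactly 4\<close>
     (\<forall>d\<in>C. (sg ^^ 4) d = d \<and> (sg ^^ 2) d \<noteq> d) \<and>
     \<comment> \<open>planarization connected\<close>
     (\<forall>d\<in>D. \<forall>d'\<in>D. (d, d') \<in> ({(x, al x) | x. x \<in> D} \<union> {(x, sg x) | x. x \<in> D})\<^sup>*) \<and>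
     \<comment> \<open>genus 0 (drawn on the sphere): Euler's formula for the planarization\<close>
     (D \<noteq> {} \<longrightarrow> int (card (nodes D sg)) - int (card D div 2) + int (card (cells D al sg)) = 2) \<and>
     \<comment> \<open>every edge is an arc ending at vertices (no closed curve through crossings only)\<close>
     (\<forall>d\<in>D. \<exists>x\<in>edge_of D al sg C d. x \<notin> C) \<and>
     \<comment> \<open>no loops: the two end darts of an edge are at distinct vertices\<close>
     (\<forall>x\<in>D - C. \<forall>y\<in>D - C. x \<noteq> y \<and> y \<in> edge_of D al sg C x \<longrightarrow> node sg x \<noteq> node sg y) \<and>
     \<comment> \<open>no edge crosses itself\<close>
     (\<forall>d\<in>C. sg d \<notin> edge_of D al sg C d) \<and>
     \<comment> \<open>adjacent edges do not cross\<close>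
     (\<forall>d\<in>C. \<forall>x\<in>edge_of D al sg C d - C. \<forall>y\<in>edge_of D al sg C (sg d) - C.
        node sg x \<noteq> node sg y)"

definition three_plane :: "'d set \<Rightarrow> ('d \<Rightarrow> 'd) \<Rightarrow> ('d \<Rightarrow> 'd) \<Rightarrow> 'd set \<Rightarrow> bool" where
  "three_plane D al sg C \<longleftrightarrow> (\<forall>e\<in>edges D al sg C. card e \<le> 8)"

text \<open>size of a cell: edge-segment incidences (= length of the boundary walk)
  plus vertex incidences (boundary darts not at a crossing)\<close>
definition cell_size :: "'d set \<Rightarrow> 'd set \<Rightarrow> nat" where
  "cell_size C f = card f + card (f - C)"

definition is_A3 :: "'d set \<Rightarrow> 'd set \<Rightarrow> bool" where
  "is_A3 C f \<longleftrightarrow> card f = 3 \<and> f \<subseteq> C"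
definition is_A4 :: "'d set \<Rightarrow> 'd set \<Rightarrow> bool" where
  "is_A4 C f \<longleftrightarrow> card f = 4 \<and> f \<subseteq> C"
definition is_A5 :: "'d set \<Rightarrow> 'd set \<Rightarrow> bool" where
  "is_A5 C f \<longleftrightarrow> card f = 5 \<and> f \<subseteq> C"
definition is_B4 :: "'d set \<Rightarrow> 'd set \<Rightarrow> bool" where
  "is_B4 C f \<longleftrightarrow> card f = 3 \<and> card (f - C) = 1"
definition is_B5 :: "'d set \<Rightarrow> 'd set \<Rightarrow> bool" where
  "is_B5 C f \<longleftrightarrow> card f = 4 \<and> card (f - C) = 1"
definition is_L :: "'d set \<Rightarrow> 'd set \<Rightarrow> bool" where
  "is_L C f \<longleftrightarrow> cell_size C f \<ge> 6"

definition N :: "'d set \<Rightarrow> ('d \<Rightarrow> 'd) \<Rightarrow> ('d \<Rightarrow> 'd) \<Rightarrow> ('d set \<Rightarrow> bool) \<Rightarrow> nat" where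
  "N D al sg T = card {f \<in> cells D al sg. T f}"

text \<open>Trails: a sequence of cells; ds!i is a dart on the boundary of cs!i whose
  segment (an inner segment) is shared with cs!(i+1), al (ds!i) lying on cs!(i+1).
  In an interior A4-cell the leaving segment is opposite to the entering one.\<close>
definition is_trail :: "'d set \<Rightarrow> ('d \<Rightarrow> 'd) \<Rightarrow> ('d \<Rightarrow> 'd) \<Rightarrow> 'd set \<Rightarrow> 'd set list \<Rightarrow> bool" where
  "is_trail D al sg C cs \<longleftrightarrow>
     length cs \<ge> 2 \<and> set cs \<subseteq> cells D al sg \<and>
     \<not> is_A4 C (hd cs) \<and> \<not> is_A4 C (last cs) \<and>
     (\<exists>ds. length ds = length cs - 1 \<and>
        (\<forall>i < length ds. ds ! i \<in> cs ! i \<and> al (ds ! i) \<in> cs ! (Suc i) \<and>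
                         ds ! i \<in> C \<and> al (ds ! i) \<in> C) \<and>
        (\<forall>i. 0 < i \<and> i < length cs - 1 \<longrightarrow>
              is_A4 C (cs ! i) \<and> ds ! i = (phi al sg ^^ 2) (al (ds ! (i - 1)))))"

text \<open>number of trails (a trail identified with its reversal) with end cells of
  types T and T'\<close>
definition tau :: "'d set \<Rightarrow> ('d \<Rightarrow> 'd) \<Rightarrow> ('d \<Rightarrow> 'd) \<Rightarrow> 'd set \<Rightarrow>
                   ('d set \<Rightarrow> bool) \<Rightarrow> ('d set \<Rightarrow> bool) \<Rightarrow> nat" where
  "tau D al sg C T T' = card ((\<lambda>cs. {cs, rev cs}) `
      {cs. is_trail D al sg C cs \<and>
           ((T (hd cs) \<and> T' (last cs)) \<or> (T' (hd cs) \<and> T (last cs)))})"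

end

theory Submission
  imports Defs "HOL-Combinatorics.Orbits"
begin

(* Both sides count inner darts, the two sides of the inner edge-segments.  An edge with
   i crossings has i - 1 inner segments, so there are at most 2|E_2| + 4|E_3| inner darts.
   Every inner dart lies on exactly one cell; an A_k-cell carries k of them and a B_k-cell at
   least k - 3.  The inner darts on L-cells pay for the trails: a trail continues
   deterministically through A_4-cells in both directions, so it is determined by the dart
   through which it enters its end cell. *)

lemma even_card_if_involution:
  assumes "finite A" and "\<And>x. x \<in> A \<Longrightarrow> f x \<in> A"
    and "\<And>x. x \<in> A \<Longrightarrow> f x \<noteq> x" and "\<And>x. x \<in> A \<Longrightarrow> f (f x) = x"
  shows "even (card A)"
proof -
  let ?pairs = "(\<lambda>x. {x, f x}) ` A"
  have "A = \<Union> ?pairs"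
    using assms(2) by blast
  moreover have "2 dvd card (\<Union> ?pairs)"
  proof (rule dvd_partition)
    show "finite (\<Union> ?pairs)"
      using \<open>A = \<Union> ?pairs\<close> assms(1) by simp
    show "\<forall>p\<in>?pairs. 2 dvd card p"
      using assms(3) by (force simp: card_insert_if)
    show "\<forall>p\<in>?pairs. \<forall>q\<in>?pairs. p \<noteq> q \<longrightarrow> p \<inter> q = {}"
    proof (intro ballI impI)
      fix p q assume "p \<in> ?pairs" "q \<in> ?pairs" "p \<noteq> q"
      then obtain x y where "x \<in> A" "y \<in> A" "p = {x, f x}" "q = {y, f y}"
        by blast
      moreover have "f (f x) = x" "f (f y) = y"
        using assms(4) \<open>x \<in> A\<close> \<open>y \<in> A\<close> by auto
      ultimately have "y \<noteq> x" "y \<noteq> f x" "f y \<noteq> x" "f y \<noteq> f x"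
        using \<open>p \<noteq> q\<close> by (metis insert_commute)+
      then show "p \<inter> q = {}"
        using \<open>p = {x, f x}\<close> \<open>q = {y, f y}\<close> by auto
    qed
  qed
  ultimately show ?thesis
    by simp
qed

(* sorted_wrt with the symmetric disjointness relation says the sets are pairwise disjoint. *)
lemma sum_list_card_le_card:
  assumes "finite S" and "\<And>A. A \<in> set As \<Longrightarrow> A \<subseteq> S"
    and "sorted_wrt (\<lambda>A B. A \<inter> B = {}) As"
  shows "(\<Sum>A\<leftarrow>As. card A) \<le> card S"
  using assms
proof (induction As arbitrary: S)
  case Nil
  then show ?case by simp
next
  case (Cons A As)
  have "(\<Sum>B\<leftarrow>As. card B) \<le> card (S - A)"
    using Cons by (intro Cons.IH) auto
  moreover have "A \<subseteq> S"
    using Cons.prems(2) by simp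
  then have "card A + card (S - A) = card S"
    using Cons.prems(1) by (simp add: card_Diff_subset card_mono finite_subset)
  ultimately show ?case
    by simp
qed

definition inner_darts :: "'d set \<Rightarrow> ('d \<Rightarrow> 'd) \<Rightarrow> 'd set \<Rightarrow> 'd set" where
  "inner_darts D al C = {d \<in> D. d \<in> C \<and> al d \<in> C}"

definition inner_darts_on ::
    "'d set \<Rightarrow> ('d \<Rightarrow> 'd) \<Rightarrow> ('d \<Rightarrow> 'd) \<Rightarrow> 'd set \<Rightarrow> ('d set \<Rightarrow> bool) \<Rightarrow> 'd set" where
  "inner_darts_on D al sg C T = {d \<in> inner_darts D al C. T (cell al sg d)}"

lemmas cell_type_defs = is_A3_def is_A4_def is_A5_def is_B4_def is_B5_def is_L_def cell_size_def

definition trail_darts :: "('d \<Rightarrow> 'd) \<Rightarrow> ('d \<Rightarrow> 'd) \<Rightarrow> 'd set \<Rightarrow> 'd set list \<Rightarrow> 'd list \<Rightarrow> bool" where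
  "trail_darts al sg C cs ds \<longleftrightarrow> length ds = length cs - 1 \<and>
     (\<forall>i < length ds. ds ! i \<in> cs ! i \<and> al (ds ! i) \<in> cs ! (Suc i) \<and>
                      ds ! i \<in> C \<and> al (ds ! i) \<in> C) \<and>
     (\<forall>i. 0 < i \<and> i < length cs - 1 \<longrightarrow>
           is_A4 C (cs ! i) \<and> ds ! i = (phi al sg ^^ 2) (al (ds ! (i - 1))))"

lemma is_trail_iff:
  "is_trail D al sg C cs \<longleftrightarrow> length cs \<ge> 2 \<and> set cs \<subseteq> cells D al sg \<and>
     \<not> is_A4 C (hd cs) \<and> \<not> is_A4 C (last cs) \<and> (\<exists>ds. trail_darts al sg C cs ds)"
  unfolding is_trail_def trail_darts_def by blast

lemma trail_dartsD:
  assumes "trail_darts al sg C cs ds"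
  shows "length ds = length cs - 1"
    and "i < length ds \<Longrightarrow> ds ! i \<in> cs ! i" and "i < length ds \<Longrightarrow> al (ds ! i) \<in> cs ! Suc i"
    and "i < length ds \<Longrightarrow> ds ! i \<in> C" and "i < length ds \<Longrightarrow> al (ds ! i) \<in> C"
    and "0 < i \<Longrightarrow> i < length ds \<Longrightarrow> is_A4 C (cs ! i)"
    and "0 < i \<Longrightarrow> i < length ds \<Longrightarrow> ds ! i = (phi al sg ^^ 2) (al (ds ! (i - 1)))"
  using assms unfolding trail_darts_def by auto

(* al (last ds) is the dart of the last cell on the segment through which the trail enters it. *)
definition trail_end_darts ::
    "'d set \<Rightarrow> ('d \<Rightarrow> 'd) \<Rightarrow> ('d \<Rightarrow> 'd) \<Rightarrow> 'd set \<Rightarrow> ('d set \<Rightarrow> bool) \<Rightarrow> ('d set \<Rightarrow> bool) \<Rightarrow> 'd set"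
  where
  "trail_end_darts D al sg C X Y = {al (last ds) | cs ds.
     is_trail D al sg C cs \<and> trail_darts al sg C cs ds \<and> X (hd cs) \<and> Y (last cs)}"

locale drawing =
  fixes D :: "'d set" and al sg :: "'d \<Rightarrow> 'd" and C :: "'d set"
  assumes connected: "connected_drawing D al sg C"
begin

lemma
  shows finite_darts: "finite D"
    and al_permutes: "al permutes D"
    and sg_permutes: "sg permutes D"
    and al_al: "d \<in> D \<Longrightarrow> al (al d) = d"
    and al_neq_self: "d \<in> D \<Longrightarrow> al d \<noteq> d"
    and crossings_subset: "C \<subseteq> D"
    and sg_crossing: "d \<in> C \<Longrightarrow> sg d \<in> C"
    and sg4_crossing: "d \<in> C \<Longrightarrow> sg (sg (sg (sg d))) = d"
    and sg2_crossing: "d \<in> C \<Longrightarrow> sg (sg d) \<noteq> d"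
    and edge_has_vertex_dart: "d \<in> D \<Longrightarrow> \<exists>x\<in>edge_of D al sg C d. x \<notin> C"
  using connected by (simp_all add: connected_drawing_def numeral_eq_Suc)

lemma al_dart: "d \<in> D \<Longrightarrow> al d \<in> D"
  using al_permutes by (simp add: permutes_in_image)

lemma sg_crossing_iff: "sg d \<in> C \<longleftrightarrow> d \<in> C"
proof -
  have "sg ` C = C"
    using finite_subset[OF crossings_subset finite_darts] sg_crossing
      inj_on_subset[OF permutes_inj[OF sg_permutes]]
    by (intro endo_inj_surj) auto
  then show ?thesis
    using permutes_inj[OF sg_permutes] by (metis image_iff inj_image_mem_iff)
qed

lemma inner_darts_iff_phi: "d \<in> D \<Longrightarrow> d \<in> inner_darts D al C \<longleftrightarrow> d \<in> C \<and> phi al sg d \<in> C"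
  by (simp add: inner_darts_def phi_def sg_crossing_iff)

lemma finite_inner_darts_on: "finite (inner_darts_on D al sg C T)"
  using finite_darts by (simp add: inner_darts_on_def inner_darts_def)

subsection \<open>Cells\<close>

lemma phi_permutes: "phi al sg permutes D"
  unfolding phi_def by (rule permutes_compose[OF al_permutes sg_permutes])

lemma permutation_phi: "permutation (phi al sg)"
  using phi_permutes finite_darts permutation_permutes by blast

lemma cell_eq_orbit: "cell al sg d = orbit (phi al sg) d"
  unfolding cell_def using orbit_altdef_permutation[OF permutation_phi] by simp

lemma self_in_cell: "d \<in> cell al sg d"
  unfolding cell_eq_orbit by (rule permutation_self_in_orbit[OF permutation_phi])

lemma phi_in_cell: "x \<in> cell al sg d \<Longrightarrow> phi al sg x \<in> cell al sg d"
  unfolding cell_eq_orbit by (rule orbit.step)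

lemma cell_eq: "x \<in> cell al sg d \<Longrightarrow> cell al sg x = cell al sg d"
  unfolding cell_eq_orbit by (metis cyclic_on_orbit'[OF permutation_phi] orbit_cyclic_eq3)

lemma cell_subset: "d \<in> D \<Longrightarrow> cell al sg d \<subseteq> D"
  unfolding cell_eq_orbit by (rule permutes_orbit_subset[OF phi_permutes])

lemma mem_cells: "f \<in> cells D al sg \<Longrightarrow> x \<in> f \<Longrightarrow> f = cell al sg x \<and> x \<in> D"
  unfolding cells_def using cell_eq cell_subset by blast

lemma finite_cell: "f \<in> cells D al sg \<Longrightarrow> finite f"
  unfolding cells_def using cell_subset finite_darts finite_subset by blast

lemma funpow_card_cell: "(phi al sg ^^ card (cell al sg x)) x = x"
proof -
  let ?p = "phi al sg"
  have x: "x \<in> orbit ?p x"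
    by (rule permutation_self_in_orbit[OF permutation_phi])
  have "card (orbit ?p x) = funpow_dist1 ?p x x"
    using card_image[OF inj_on_funpow_dist1[OF x]] by (simp add: orbit_conv_funpow_dist1[OF x])
  then show ?thesis
    using funpow_dist1_prop[OF x] by (simp add: cell_eq_orbit)
qed

lemma A4_opposite_involution:
  assumes "f \<in> cells D al sg" and "is_A4 C f" and "x \<in> f"
  shows "(phi al sg ^^ 2) ((phi al sg ^^ 2) x) = x"
proof -
  have "card (cell al sg x) = 4"
    using assms mem_cells by (auto simp: is_A4_def)
  then have "(phi al sg ^^ 4) x = x"
    using funpow_card_cell by metis
  moreover have "phi al sg ^^ 4 = (phi al sg ^^ 2) \<circ> (phi al sg ^^ 2)"
    by (simp flip: funpow_add)
  ultimately show ?thesis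
    by simp
qed

subsection \<open>Edges\<close>

abbreviation edge :: "'d \<Rightarrow> 'd set" where
  "edge \<equiv> edge_of D al sg C"

lemma self_in_edge: "d \<in> edge d"
  unfolding edge_of_def by simp

lemma al_in_edge: "x \<in> edge d \<Longrightarrow> x \<in> D \<Longrightarrow> al x \<in> edge d"
  unfolding edge_of_def edge_rel_def by (auto intro: rtrancl_into_rtrancl)

lemma opposite_in_edge: "x \<in> edge d \<Longrightarrow> x \<in> C \<Longrightarrow> sg (sg x) \<in> edge d"
  unfolding edge_of_def edge_rel_def by (auto intro: rtrancl_into_rtrancl)

lemma edge_subset_closed:
  assumes "d \<in> S" and "\<And>x. x \<in> S \<Longrightarrow> x \<in> D \<and> al x \<in> S"
    and "\<And>x. x \<in> S \<Longrightarrow> x \<in> C \<Longrightarrow> sg (sg x) \<in> S"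
  shows "edge d \<subseteq> S"
proof
  fix y assume "y \<in> edge d"
  then have "(d, y) \<in> (edge_rel D al sg C)\<^sup>*"
    unfolding edge_of_def by simp
  then show "y \<in> S"
    using assms by (induct rule: rtrancl_induct) (auto simp: edge_rel_def)
qed

lemma edge_subset: "d \<in> D \<Longrightarrow> edge d \<subseteq> D"
  using crossings_subset by (intro edge_subset_closed) (auto simp: al_dart sg_crossing)

lemma sym_edge_rel: "sym (edge_rel D al sg C)"
  by (rule symI) (auto simp: edge_rel_def al_al al_dart sg_crossing sg4_crossing)

lemma edge_eq: "x \<in> edge d \<Longrightarrow> edge x = edge d"
  using sym_rtrancl[OF sym_edge_rel] unfolding edge_of_def
  by (auto dest: symD intro: rtrancl_trans)

lemma even_card_edge: "d \<in> D \<Longrightarrow> even (card (edge d))"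
  using edge_subset[of d] finite_subset[OF _ finite_darts]
  by (intro even_card_if_involution[where f = al]) (auto simp: al_in_edge al_neq_self al_al)

(* The edge and its crossing darts come in pairs, and some dart of the edge is at a vertex. *)
lemma card_edge_minus_crossings_ge:
  assumes "d \<in> D"
  shows "card (edge d - C) \<ge> 2"
proof -
  have fin: "finite (edge d)"
    using edge_subset[OF assms] finite_darts finite_subset by blast
  have "even (card (edge d \<inter> C))"
    using fin sg2_crossing sg4_crossing
    by (intro even_card_if_involution[where f = "\<lambda>x. sg (sg x)"])
       (auto simp: opposite_in_edge sg_crossing)
  then have "even (card (edge d - C))"
    using even_card_edge[OF assms] fin
    by (simp add: card_Diff_subset_Int card_mono)
  moreover have "card (edge d - C) \<noteq> 0"
    using fin edge_has_vertex_dart[OF assms] by auto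
  ultimately show ?thesis
    by (intro dvd_imp_le) auto
qed

lemma card_inner_darts_edge_le:
  assumes "d \<in> D"
  shows "card (edge d \<inter> inner_darts D al C) \<le> card (edge d) - 4"
proof -
  let ?e = "edge d" and ?I = "inner_darts D al C"
  let ?V = "?e - C"
  have "?e \<subseteq> D"
    using edge_subset[OF assms] .
  then have fin: "finite ?e"
    using finite_darts finite_subset by blast
  show ?thesis
  proof (cases "\<exists>x\<in>?V. al x \<notin> C")
    case True
    then obtain x where x: "x \<in> ?e" "x \<notin> C" "al x \<notin> C"
      by blast
    have "edge x \<subseteq> {x, al x}"
      using x \<open>?e \<subseteq> D\<close> by (intro edge_subset_closed) (auto simp: al_al al_dart)
    then have "?e \<inter> ?I = {}"
      using x edge_eq[OF x(1)] by (auto simp: inner_darts_def)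
    then show ?thesis
      by simp
  next
    case False
    have "card ?V \<ge> 2"
      using card_edge_minus_crossings_ge[OF assms] .
    have "al ` ?V \<subseteq> ?e \<inter> C"
      using False \<open>?e \<subseteq> D\<close> by (auto simp: al_in_edge)
    then have "card (?V \<union> al ` ?V) = 2 * card ?V"
      using fin card_image[OF inj_on_subset[OF permutes_inj[OF al_permutes]]]
      by (subst card_Un_disjoint) auto
    moreover have "?V \<union> al ` ?V \<subseteq> ?e - ?I"
      using \<open>al ` ?V \<subseteq> ?e \<inter> C\<close> \<open>?e \<subseteq> D\<close> by (auto simp: inner_darts_def al_al)
    then have "card (?V \<union> al ` ?V) \<le> card ?e - card (?e \<inter> ?I)"
      using fin card_mono[of "?e - ?I"] by (simp add: Diff_Int card_Diff_subset_Int)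
    ultimately show ?thesis
      using \<open>card ?V \<ge> 2\<close> by linarith
  qed
qed

lemma card_inner_darts_le:
  assumes "three_plane D al sg C"
  shows "card (inner_darts D al C) \<le> 2 * card (E_i D al sg C 2) + 4 * card (E_i D al sg C 3)"
proof -
  let ?E = "edges D al sg C" and ?I = "inner_darts D al C"
  have fin: "finite ?E"
    unfolding edges_def using finite_darts by simp
  have "?I \<subseteq> (\<Union>e\<in>?E. e \<inter> ?I)"
    using self_in_edge by (auto simp: edges_def inner_darts_def)
  then have "card ?I \<le> card (\<Union>e\<in>?E. e \<inter> ?I)"
    using fin finite_darts by (intro card_mono) (auto simp: inner_darts_def)
  also have "\<dots> \<le> (\<Sum>e\<in>?E. card (e \<inter> ?I))"
    by (rule card_UN_le[OF fin])
  also have "\<dots> \<le> (\<Sum>e\<in>?E. (if card e = 6 then 2 else 0) + (if card e = 8 then 4 else 0))"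
  proof (rule sum_mono)
    fix e assume "e \<in> ?E"
    then obtain d where d: "d \<in> D" "e = edge d"
      unfolding edges_def by blast
    then obtain k where k: "card e = 2 * k"
      using even_card_edge by blast
    moreover have "k \<le> 4"
      using assms \<open>e \<in> ?E\<close> k by (force simp: three_plane_def)
    ultimately show "card (e \<inter> ?I) \<le> (if card e = 6 then 2 else 0) + (if card e = 8 then 4 else 0)"
      using card_inner_darts_edge_le[OF d(1)] d(2) by (auto simp: le_Suc_eq numeral_eq_Suc)
  qed
  also have "\<dots> = 2 * card (E_i D al sg C 2) + 4 * card (E_i D al sg C 3)"
    using fin by (simp add: sum.distrib E_i_def flip: sum.inter_filter)
  finally show ?thesis .
qed

subsection \<open>Inner darts on cells\<close>

lemma cell_Int_inner_darts_eq:
  assumes "f \<in> cells D al sg" and "f \<subseteq> C"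
  shows "f \<inter> inner_darts D al C = f"
proof -
  have "f \<subseteq> inner_darts D al C"
  proof
    fix d assume "d \<in> f"
    then have "f = cell al sg d" "d \<in> D"
      using mem_cells[OF assms(1)] by auto
    then have "phi al sg d \<in> f"
      using phi_in_cell[OF self_in_cell] by simp
    then show "d \<in> inner_darts D al C"
      using inner_darts_iff_phi[OF \<open>d \<in> D\<close>] assms(2) \<open>d \<in> f\<close> by blast
  qed
  then show ?thesis
    by blast
qed

lemma card_cell_inner_darts_ge:
  assumes f: "f \<in> cells D al sg" and "card (f - C) = 1"
  shows "card f - 2 \<le> card (f \<inter> inner_darts D al C)"
proof -
  let ?I = "inner_darts D al C"
  let ?X = "f \<inter> C - ?I"
  obtain v where v: "f - C = {v}"
    using \<open>card (f - C) = 1\<close> by (rule card_1_singletonE)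
  have "phi al sg ` ?X \<subseteq> {v}"
  proof
    fix y assume "y \<in> phi al sg ` ?X"
    then obtain z where z: "z \<in> ?X" "y = phi al sg z"
      by blast
    then have "f = cell al sg z" "z \<in> D"
      using mem_cells[OF f] by auto
    then have "y \<in> f" "y \<notin> C"
      using z phi_in_cell[OF self_in_cell] inner_darts_iff_phi by auto
    then show "y \<in> {v}"
      using v by blast
  qed
  then have "card ?X \<le> card {v}"
    by (intro card_inj_on_le[OF inj_on_subset[OF permutes_inj[OF phi_permutes] subset_UNIV]]) auto
  have "card f \<le> card ((f - C) \<union> ?X \<union> (f \<inter> ?I))"
    using finite_cell[OF f] by (intro card_mono) auto
  also have "\<dots> \<le> card (f - C) + card ?X + card (f \<inter> ?I)"
    using card_Un_le[of "(f - C) \<union> ?X" "f \<inter> ?I"] card_Un_le[of "f - C" ?X] by linarith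
  finally show ?thesis
    using \<open>card (f - C) = 1\<close> \<open>card ?X \<le> card {v}\<close> by simp
qed

lemma mult_N_le_card_inner_darts_on:
  assumes "\<And>f. f \<in> cells D al sg \<Longrightarrow> T f \<Longrightarrow> w \<le> card (f \<inter> inner_darts D al C)"
  shows "w * N D al sg T \<le> card (inner_darts_on D al sg C T)"
proof -
  let ?F = "{f \<in> cells D al sg. T f}" and ?I = "inner_darts D al C"
  have fin: "finite ?F"
    unfolding cells_def using finite_darts by simp
  have "w * N D al sg T = (\<Sum>f\<in>?F. w)"
    by (simp add: N_def)
  also have "\<dots> \<le> (\<Sum>f\<in>?F. card (f \<inter> ?I))"
    using assms by (intro sum_mono) auto
  also have "\<dots> = card (\<Union>f\<in>?F. f \<inter> ?I)"
  proof (rule card_UN_disjoint[symmetric, OF fin])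
    show "\<forall>f\<in>?F. finite (f \<inter> ?I)"
      using finite_cell by blast
    show "\<forall>f\<in>?F. \<forall>g\<in>?F. f \<noteq> g \<longrightarrow> f \<inter> ?I \<inter> (g \<inter> ?I) = {}"
      using mem_cells by blast
  qed
  also have "(\<Union>f\<in>?F. f \<inter> ?I) = inner_darts_on D al sg C T"
  proof (intro equalityI subsetI)
    fix d assume "d \<in> (\<Union>f\<in>?F. f \<inter> ?I)"
    then obtain f where "f \<in> ?F" "d \<in> f" "d \<in> ?I"
      by blast
    then show "d \<in> inner_darts_on D al sg C T"
      using mem_cells by (auto simp: inner_darts_on_def)
  next
    fix d assume "d \<in> inner_darts_on D al sg C T"
    then have "d \<in> ?I" "T (cell al sg d)" "cell al sg d \<in> cells D al sg"
      by (auto simp: inner_darts_on_def inner_darts_def cells_def)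
    then show "d \<in> (\<Union>f\<in>?F. f \<inter> ?I)"
      using self_in_cell by blast
  qed
  finally show ?thesis .
qed

lemma weighted_cell_count_le:
  "3 * N D al sg (is_A3 C) + N D al sg (is_B4 C) + 4 * N D al sg (is_A4 C)
     + 2 * N D al sg (is_B5 C) + 5 * N D al sg (is_A5 C) + card (inner_darts_on D al sg C (is_L C))
   \<le> card (inner_darts D al C)"
proof -
  let ?S = "inner_darts_on D al sg C"
  have "3 * N D al sg (is_A3 C) \<le> card (?S (is_A3 C))"
    "4 * N D al sg (is_A4 C) \<le> card (?S (is_A4 C))"
    "5 * N D al sg (is_A5 C) \<le> card (?S (is_A5 C))"
    by (intro mult_N_le_card_inner_darts_on; simp add: cell_type_defs cell_Int_inner_darts_eq)+
  moreover have "1 * N D al sg (is_B4 C) \<le> card (?S (is_B4 C))"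
    "2 * N D al sg (is_B5 C) \<le> card (?S (is_B5 C))"
    by (intro mult_N_le_card_inner_darts_on; use card_cell_inner_darts_ge in \<open>force simp: cell_type_defs\<close>)+
  moreover have "(\<Sum>A\<leftarrow>[?S (is_A3 C), ?S (is_B4 C), ?S (is_A4 C), ?S (is_B5 C), ?S (is_A5 C),
      ?S (is_L C)]. card A) \<le> card (inner_darts D al C)"
    using finite_darts
    by (intro sum_list_card_le_card)
      (auto simp: inner_darts_on_def inner_darts_def cell_type_defs Diff_eq_empty_iff[THEN iffD2])
  ultimately show ?thesis
    by simp
qed

subsection \<open>Trails\<close>

lemma trail_cells:
  assumes "is_trail D al sg C cs" and "trail_darts al sg C cs ds"
  shows "length ds = length cs - 1" and "ds \<noteq> []"
    and "cs ! 0 = cell al sg (ds ! 0)"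
    and "\<And>i. i < length ds \<Longrightarrow> cs ! Suc i = cell al sg (al (ds ! i))"
    and "\<And>i. i < length ds \<Longrightarrow> ds ! i \<in> D"
    and "\<And>i. i < length cs \<Longrightarrow> cs ! i \<in> cells D al sg"
proof -
  show len: "length ds = length cs - 1"
    using assms(2) by (simp add: trail_darts_def)
  then show "ds \<noteq> []"
    using assms(1) by (auto simp: is_trail_iff)
  show cells: "\<And>i. i < length cs \<Longrightarrow> cs ! i \<in> cells D al sg"
    using assms(1) by (auto simp: is_trail_iff)
  have dart: "ds ! i \<in> cs ! i" "al (ds ! i) \<in> cs ! Suc i" if "i < length ds" for i
    using assms(2) that by (auto simp: trail_darts_def)
  show "cs ! 0 = cell al sg (ds ! 0)"
  proof -
    have "0 < length ds"
      using \<open>ds \<noteq> []\<close> by simp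
    moreover have "0 < length cs"
      using calculation len by linarith
    ultimately have "ds ! 0 \<in> cs ! 0" "cs ! 0 \<in> cells D al sg"
      using dart(1) cells by blast+
    then show ?thesis
      using mem_cells by blast
  qed
  show "cs ! Suc i = cell al sg (al (ds ! i))" if "i < length ds" for i
    using dart(2)[OF that] cells[of "Suc i"] mem_cells len that by auto
  show "ds ! i \<in> D" if "i < length ds" for i
  proof -
    have "i < length cs"
      using len that by linarith
    then show ?thesis
      using dart(1)[OF that] cells mem_cells by blast
  qed
qed

lemma trail_darts_eq_if_hd_eq:
  assumes "trail_darts al sg C cs ds" and "trail_darts al sg C cs' ds'" and "hd ds = hd ds'"
  shows "i < length ds \<Longrightarrow> i < length ds' \<Longrightarrow> ds ! i = ds' ! i"
proof (induction i)
  case 0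
  then show ?case
    using assms(3) by (simp add: hd_conv_nth)
next
  case (Suc i)
  then show ?case
    using assms(1,2) by (simp add: trail_darts_def)
qed

lemma trail_nth_eq_if_hd_darts_eq:
  assumes "is_trail D al sg C cs" "trail_darts al sg C cs ds"
    and "is_trail D al sg C cs'" "trail_darts al sg C cs' ds'" and "hd ds = hd ds'"
    and "i < length cs" and "i < length cs'"
  shows "cs ! i = cs' ! i"
proof (cases i)
  case 0
  then show ?thesis
    using trail_cells(2,3)[OF assms(1,2)] trail_cells(2,3)[OF assms(3,4)] assms(5)
    by (simp add: hd_conv_nth)
next
  case (Suc j)
  then show ?thesis
    using trail_cells(1,4)[OF assms(1,2)] trail_cells(1,4)[OF assms(3,4)]
      trail_darts_eq_if_hd_eq[OF assms(2,4,5), of j] assms(6,7)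
    by simp
qed

lemma trail_length_le_if_hd_darts_eq:
  assumes "is_trail D al sg C cs" "trail_darts al sg C cs ds"
    and "is_trail D al sg C cs'" "trail_darts al sg C cs' ds'" and "hd ds = hd ds'"
  shows "length cs \<le> length cs'"
proof (rule ccontr)
  assume "\<not> length cs \<le> length cs'"
  define k where "k = length cs' - 1"
  have k: "0 < k" "k < length cs - 1" "k < length cs'"
    using assms(3) \<open>\<not> length cs \<le> length cs'\<close> by (auto simp: k_def is_trail_iff)
  have "cs' \<noteq> []"
    using k(3) by auto
  then have "last cs' = cs' ! k"
    by (simp add: k_def last_conv_nth)
  also have "\<dots> = cs ! k"
    using trail_nth_eq_if_hd_darts_eq[OF assms, of k] k by simp
  finally have "last cs' = cs ! k" .
  moreover have "is_A4 C (cs ! k)"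
    using assms(2) k by (simp add: trail_darts_def)
  ultimately show False
    using assms(3) by (simp add: is_trail_iff)
qed

lemma trail_eq_if_hd_darts_eq:
  assumes "is_trail D al sg C cs" "trail_darts al sg C cs ds"
    and "is_trail D al sg C cs'" "trail_darts al sg C cs' ds'" and "hd ds = hd ds'"
  shows "cs = cs'"
proof -
  have "length cs = length cs'"
    using trail_length_le_if_hd_darts_eq[OF assms]
      trail_length_le_if_hd_darts_eq[OF assms(3,4,1,2) assms(5)[symmetric]] by simp
  then show ?thesis
    using trail_nth_eq_if_hd_darts_eq[OF assms] by (simp add: nth_equalityI)
qed

lemma trail_darts_back_step:
  assumes "is_trail D al sg C cs" and "trail_darts al sg C cs ds"
    and "0 < j" and "j < length ds"
  shows "(phi al sg ^^ 2) (ds ! j) = al (ds ! (j - 1))"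
proof -
  have "al (ds ! (j - 1)) \<in> cs ! j"
    using trail_dartsD(3)[OF assms(2), of "j - 1"] assms(3,4) by simp
  moreover have "j < length cs"
    using trail_cells(1)[OF assms(1,2)] assms(4) by simp
  ultimately have "(phi al sg ^^ 2) ((phi al sg ^^ 2) (al (ds ! (j - 1)))) = al (ds ! (j - 1))"
    using A4_opposite_involution trail_cells(6)[OF assms(1,2)] trail_dartsD(6)[OF assms(2,3,4)]
    by blast
  then show ?thesis
    using trail_dartsD(7)[OF assms(2,3,4)] by simp
qed

lemma trail_darts_rev:
  assumes "is_trail D al sg C cs" and "trail_darts al sg C cs ds"
  shows "trail_darts al sg C (rev cs) (rev (map al ds))"
proof -
  let ?k = "length ds" and ?r = "rev (map al ds)"
  have len: "length cs = Suc ?k"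
    using trail_cells(1)[OF assms] assms(1) by (auto simp: is_trail_iff)
  have r_nth: "?r ! i = al (ds ! (?k - Suc i))" if "i < ?k" for i
    using that by (simp add: rev_nth)
  have rev_cs_nth: "rev cs ! i = cs ! (?k - i)" if "i \<le> ?k" for i
    using len that by (simp add: rev_nth)
  have al_al_ds: "al (al (ds ! j)) = ds ! j" if "j < ?k" for j
    using trail_cells(5)[OF assms that] al_al by blast
  note seg = trail_dartsD(2-5)[OF assms(2)]
  have "?r ! i \<in> rev cs ! i \<and> al (?r ! i) \<in> rev cs ! Suc i \<and> ?r ! i \<in> C \<and> al (?r ! i) \<in> C"
    if "i < ?k" for i
  proof -
    have "Suc (?k - Suc i) = ?k - i"
      using that by simp
    then show ?thesis
      using seg[of "?k - Suc i"] r_nth[OF that] rev_cs_nth[of i] rev_cs_nth[of "Suc i"]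
        al_al_ds[of "?k - Suc i"] that
      by simp
  qed
  moreover have "is_A4 C (rev cs ! i) \<and> ?r ! i = (phi al sg ^^ 2) (al (?r ! (i - 1)))"
    if "0 < i" "i < ?k" for i
  proof -
    define j where "j = ?k - i"
    have j: "0 < j" "j < ?k" "?k - Suc i = j - 1"
      using that by (auto simp: j_def)
    have "?k - Suc (i - 1) = j"
      using that by (simp add: j_def)
    then have "al (?r ! (i - 1)) = ds ! j"
      using r_nth[of "i - 1"] al_al_ds[OF j(2)] that by simp
    then have "(phi al sg ^^ 2) (al (?r ! (i - 1))) = al (ds ! (j - 1))"
      using trail_darts_back_step[OF assms j(1,2)] by simp
    moreover have "?r ! i = al (ds ! (j - 1))"
      using r_nth[OF that(2)] j(3) by simp
    moreover have "rev cs ! i = cs ! j"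
      using rev_cs_nth[of i] that by (simp add: j_def)
    ultimately show ?thesis
      using trail_dartsD(6)[OF assms(2) j(1,2)] by simp
  qed
  ultimately show ?thesis
    using len unfolding trail_darts_def by simp
qed

lemma is_trail_rev:
  assumes "is_trail D al sg C cs"
  shows "is_trail D al sg C (rev cs)"
proof -
  obtain ds where "trail_darts al sg C cs ds"
    using assms by (auto simp: is_trail_iff)
  then have "trail_darts al sg C (rev cs) (rev (map al ds))"
    using trail_darts_rev[OF assms] by blast
  moreover have "cs \<noteq> []"
    using assms by (auto simp: is_trail_iff)
  ultimately show ?thesis
    using assms by (auto simp: is_trail_iff hd_rev last_rev)
qed

lemma trail_eq_if_last_darts_eq:
  assumes "is_trail D al sg C cs" "trail_darts al sg C cs ds"
    and "is_trail D al sg C cs'" "trail_darts al sg C cs' ds'" and "last ds = last ds'"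
  shows "cs = cs'"
proof -
  have "hd (rev (map al ds)) = hd (rev (map al ds'))"
    using trail_cells(2)[OF assms(1,2)] trail_cells(2)[OF assms(3,4)] assms(5)
    by (simp add: hd_rev last_map)
  then have "rev cs = rev cs'"
    using trail_eq_if_hd_darts_eq[OF is_trail_rev[OF assms(1)] trail_darts_rev[OF assms(1,2)]
        is_trail_rev[OF assms(3)] trail_darts_rev[OF assms(3,4)]] by blast
  then show ?thesis
    by simp
qed

lemma trail_last_dart:
  assumes "is_trail D al sg C cs" and "trail_darts al sg C cs ds"
  shows "al (last ds) \<in> inner_darts D al C" and "cell al sg (al (last ds)) = last cs"
    and "al (al (last ds)) = last ds"
proof -
  define m where "m = length ds - 1"
  have "0 < length ds"
    using trail_cells(2)[OF assms] by simp
  then have m: "m < length ds" "Suc m = length cs - 1"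
    using trail_cells(1)[OF assms] unfolding m_def by arith+
  have "last ds = ds ! m"
    using trail_cells(2)[OF assms] by (simp add: m_def last_conv_nth)
  have "last ds \<in> D" "last ds \<in> C" "al (last ds) \<in> C"
    using m \<open>last ds = ds ! m\<close> trail_cells(5)[OF assms] trail_dartsD(4,5)[OF assms(2)] by auto
  then show "al (last ds) \<in> inner_darts D al C" and "al (al (last ds)) = last ds"
    by (simp_all add: inner_darts_def al_dart al_al)
  have "cs \<noteq> []"
    using assms(1) by (auto simp: is_trail_iff)
  then show "cell al sg (al (last ds)) = last cs"
    using trail_cells(4)[OF assms m(1)] m \<open>last ds = ds ! m\<close> by (simp add: last_conv_nth)
qed

lemma trail_end_darts_subset: "trail_end_darts D al sg C X Y \<subseteq> inner_darts_on D al sg C Y"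
  using trail_last_dart(1,2) by (fastforce simp: trail_end_darts_def inner_darts_on_def)

lemma trail_end_darts_disjoint:
  assumes "\<And>f. X f \<Longrightarrow> X' f \<Longrightarrow> False"
  shows "trail_end_darts D al sg C X Y \<inter> trail_end_darts D al sg C X' Y = {}"
proof (rule ccontr)
  assume "trail_end_darts D al sg C X Y \<inter> trail_end_darts D al sg C X' Y \<noteq> {}"
  then obtain cs ds cs' ds' where
    cs: "is_trail D al sg C cs" "trail_darts al sg C cs ds" "X (hd cs)" and
    cs': "is_trail D al sg C cs'" "trail_darts al sg C cs' ds'" "X' (hd cs')" and
    "al (last ds) = al (last ds')"
    unfolding trail_end_darts_def by blast
  then have "last ds = last ds'"
    using trail_last_dart(3) by metis
  then have "cs = cs'"
    using trail_eq_if_last_darts_eq cs(1,2) cs'(1,2) by blast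
  then show False
    using assms cs(3) cs'(3) by blast
qed

lemma trail_orient:
  assumes "is_trail D al sg C cs" and "(X (hd cs) \<and> Y (last cs)) \<or> (Y (hd cs) \<and> X (last cs))"
  obtains cs0 where "{cs0, rev cs0} = {cs, rev cs}" and "is_trail D al sg C cs0"
    and "X (hd cs0)" and "Y (last cs0)"
proof -
  have "cs \<noteq> []"
    using assms(1) by (auto simp: is_trail_iff)
  then show ?thesis
    using assms that[of cs] that[of "rev cs"] is_trail_rev
    by (auto simp: hd_rev last_rev insert_commute)
qed

lemma tau_le_card_trail_end_darts: "tau D al sg C X Y \<le> card (trail_end_darts D al sg C X Y)"
proof -
  let ?T = "{cs. is_trail D al sg C cs \<and> (X (hd cs) \<and> Y (last cs) \<or> Y (hd cs) \<and> X (last cs))}"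
  define enters where "enters p d \<longleftrightarrow> (\<exists>cs ds. p = {cs, rev cs} \<and> is_trail D al sg C cs
    \<and> trail_darts al sg C cs ds \<and> X (hd cs) \<and> Y (last cs) \<and> d = al (last ds))" for p d
  have "card ((\<lambda>cs. {cs, rev cs}) ` ?T) \<le> card (trail_end_darts D al sg C X Y)"
  proof (rule card_le_if_inj_on_rel[where r = enters])
    show "finite (trail_end_darts D al sg C X Y)"
      using finite_subset[OF trail_end_darts_subset finite_inner_darts_on] .
  next
    fix p assume "p \<in> (\<lambda>cs. {cs, rev cs}) ` ?T"
    then obtain cs where "p = {cs, rev cs}" "is_trail D al sg C cs"
      "X (hd cs) \<and> Y (last cs) \<or> Y (hd cs) \<and> X (last cs)"
      by blast
    then obtain cs0 where "p = {cs0, rev cs0}" "is_trail D al sg C cs0" "X (hd cs0)" "Y (last cs0)"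
      using trail_orient by metis
    moreover obtain ds0 where "trail_darts al sg C cs0 ds0"
      using \<open>is_trail D al sg C cs0\<close> by (auto simp: is_trail_iff)
    ultimately show "\<exists>d. d \<in> trail_end_darts D al sg C X Y \<and> enters p d"
      unfolding enters_def trail_end_darts_def by blast
  next
    fix p p' d
    assume "enters p d" and "enters p' d"
    then show "p = p'"
      unfolding enters_def using trail_last_dart(3) trail_eq_if_last_darts_eq by metis
  qed
  then show ?thesis
    by (simp add: tau_def)
qed

lemma tau_L_sum_le:
  "tau D al sg C (is_B4 C) (is_L C) + tau D al sg C (is_B5 C) (is_L C)
     + tau D al sg C (is_A3 C) (is_L C) + tau D al sg C (is_A5 C) (is_L C)
   \<le> card (inner_darts_on D al sg C (is_L C))"
proof -
  let ?E = "\<lambda>X. trail_end_darts D al sg C X (is_L C)"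
  have "(\<Sum>A\<leftarrow>[?E (is_B4 C), ?E (is_B5 C), ?E (is_A3 C), ?E (is_A5 C)]. card A)
      \<le> card (inner_darts_on D al sg C (is_L C))"
    by (intro sum_list_card_le_card finite_inner_darts_on)
      (auto dest: trail_end_darts_subset[THEN subsetD] intro!: trail_end_darts_disjoint
        simp: cell_type_defs Diff_eq_empty_iff[THEN iffD2])
  then show ?thesis
    using tau_le_card_trail_end_darts[of "is_B4 C" "is_L C"] tau_le_card_trail_end_darts[of "is_B5 C" "is_L C"]
      tau_le_card_trail_end_darts[of "is_A3 C" "is_L C"] tau_le_card_trail_end_darts[of "is_A5 C" "is_L C"]
    by simp
qed

end

theorem mainTheorem6:
  fixes D :: "'d set" and al sg :: "'d \<Rightarrow> 'd" and C :: "'d set"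
  assumes "connected_drawing D al sg C"
    and "three_plane D al sg C"
  shows "2 * card (E_i D al sg C 2) + 4 * card (E_i D al sg C 3)
     \<ge> 3 * N D al sg (is_A3 C) + N D al sg (is_B4 C) + 4 * N D al sg (is_A4 C)
       + 2 * N D al sg (is_B5 C) + 5 * N D al sg (is_A5 C)
       + tau D al sg C (is_B4 C) (is_L C) + tau D al sg C (is_B5 C) (is_L C)
       + tau D al sg C (is_A3 C) (is_L C) + tau D al sg C (is_A5 C) (is_L C)"
proof -
  interpret drawing D al sg C
    by (rule drawing.intro) fact
  show ?thesis
    using card_inner_darts_le[OF assms(2)] weighted_cell_count_le tau_L_sum_le by linarith
qed

end
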